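(* There is an absolute constant $\alpha>0$ such that for every integer $k>5$ there exists a $k$-terminal network $(G,c)$ such that every mimicking network $(G',c')$ of $(G,c)$ satisfies $|V(G')|\ge 2^{\alpha k}$. Moreover, $G$ can be taken to be bipartite with all the terminals on one side of the bipartition and all the non-terminals on the other side.
   Context: A network $(G,c)$ is an undirected graph $G$ with edge costs $c:E(G)\to\mathbb{R}^+$; its size is $|V(G)|$. A $k$-terminal network additionally has a set $Q=\{q_1,\dots,q_k\}\subseteq V(G)$ of distinguished vertices called terminals. For $S\subset Q$ with $S\neq\emptyset,Q$, write $\bar S=Q\setminus S$; a cut $(W,V(G)\setminus W)$ is $S$-separating if $W\cap Q\in\{S,\bar S\}$. The cost of a cut is the total cost of the edges with exactly one endpoint in $W$ (the cutset). $\mathrm{mincut}_{G,c}(S,\bar S)$ denotes the minimum cost of an $S$-separating cut. A mimicking network of a $k$-terminal network $(G,c)$ is a $k$-terminal network $(G',c')$ with the same terminal set $Q$ such that $\mathrm{mincut}_{G',c'}(S,\bar S)=\mathrm{mincut}_{G,c}(S,\bar S)$ for every $S\subset Q$ with $S\neq\emptyset,Q$. *)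

theory Defs
  imports Complex_Main
begin

definition network :: "'a set \<Rightarrow> 'a set set \<Rightarrow> ('a set \<Rightarrow> real) \<Rightarrow> bool" where
  "network V E c \<longleftrightarrow> finite V \<and>
     (\<forall>e\<in>E. \<exists>u v. e = {u, v} \<and> u \<noteq> v \<and> u \<in> V \<and> v \<in> V) \<and>
     (\<forall>e\<in>E. c e > 0)"

definition cut_cost :: "'a set set \<Rightarrow> ('a set \<Rightarrow> real) \<Rightarrow> 'a set \<Rightarrow> real" where
  "cut_cost E c W = (\<Sum>e\<in>{e\<in>E. card (e \<inter> W) = 1}. c e)"

definition separating :: "'a set \<Rightarrow> 'a set \<Rightarrow> 'a set \<Rightarrow> 'a set \<Rightarrow> bool" where
  "separating V Q S W \<longleftrightarrow> W \<subseteq> V \<and> (W \<inter> Q = S \<or> W \<inter> Q = Q - S)"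

definition mincut :: "'a set \<Rightarrow> 'a set set \<Rightarrow> ('a set \<Rightarrow> real) \<Rightarrow> 'a set \<Rightarrow> 'a set \<Rightarrow> real" where
  "mincut V E c Q S = Min (cut_cost E c ` {W. separating V Q S W})"

definition mimicking ::
  "'a set \<Rightarrow> 'a set set \<Rightarrow> ('a set \<Rightarrow> real) \<Rightarrow> 'a set \<Rightarrow>
   'a set \<Rightarrow> 'a set set \<Rightarrow> ('a set \<Rightarrow> real) \<Rightarrow> bool" where
  "mimicking V E c Q V' E' c' \<longleftrightarrow> network V' E' c' \<and> Q \<subseteq> V' \<and>
     (\<forall>S. S \<subseteq> Q \<and> S \<noteq> {} \<and> S \<noteq> Q \<longrightarrow> mincut V' E' c' Q S = mincut V E c Q S)"

end

theory Submission
  imports Defs "HOL-Analysis.Continuum_Not_Denumerable"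
begin

(*
  Every min-cut value of a network is a sum of edge costs, hence lies in the
  Q-linear span of its at most |V|^2 edge costs.  A mimicking network (V',E',c')
  reproduces all min-cut values of (G,c), so if (G,c) has N min-cut values that
  are linearly independent over Q, then N <= |V'|^2.

  The hard instance is a bipartite "star gadget": terminals 0..k-1, and one
  non-terminal v_j for each member T_j of an antichain of subsets of
  {1..k-1}; v_j is joined to terminal 0 with cost a_j and to each terminal of
  T_j with cost 1.  A cut separating S from the other terminals may place each
  v_j independently, so its min-cut value is the sum over j of
  min(|T_j n S|, a_j + |T_j - S|).  Taking |T_j|-1 < a_j < |T_j| and S = T_Y,
  this is a_Y plus a constant depending on Y only; choosing the a_j so that
  these values are Q-independent (possible since finite-dimensional Q-spans
  are countable) yields 2^m independent values, where the antichain of size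
  2^m = 2^((k-1) div 2) is given by choosing one element from each of m pairs.
*)


section \<open>The reals as a vector space over the rationals\<close>

definition rat_scale :: "rat \<Rightarrow> real \<Rightarrow> real" where
  "rat_scale q x = of_rat q * x"

interpretation Q: vector_space rat_scale
  by unfold_locales (auto simp: rat_scale_def algebra_simps of_rat_add of_rat_mult)

lemma countable_Q_span: "finite S \<Longrightarrow> countable (Q.span S)"
proof (induction S rule: finite_induct)
  case empty
  then show ?case by simp
next
  case (insert b S)
  have "Q.span (insert b S) \<subseteq> (\<lambda>(x, q). x + rat_scale q b) ` (Q.span S \<times> UNIV)"
  proof
    fix x assume "x \<in> Q.span (insert b S)"
    then obtain q where "x - rat_scale q b \<in> Q.span S"
      unfolding Q.span_insert by auto
    then show "x \<in> (\<lambda>(x, q). x + rat_scale q b) ` (Q.span S \<times> UNIV)"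
      by (auto intro!: image_eqI[of _ _ "(x - rat_scale q b, q)"])
  qed
  moreover have "countable ((\<lambda>(x, q). x + rat_scale q b) ` (Q.span S \<times> (UNIV :: rat set)))"
    using insert by auto
  ultimately show ?case
    by (rule countable_subset)
qed

text \<open>Since open intervals are uncountable, a finite family of reals that is
  linearly independent over Q can be chosen inside arbitrary unit intervals.\<close>
lemma Q_independent_in_intervals:
  fixes lo :: "'i \<Rightarrow> real"
  assumes "finite J"
  shows "\<exists>p. inj_on p J \<and> Q.independent (p ` J) \<and> (\<forall>j\<in>J. lo j < p j \<and> p j < lo j + 1)"
  using assms
proof (induction J rule: finite_induct)
  case empty
  then show ?case by (auto simp: Q.independent_empty)
next
  case (insert i J)
  then obtain p where p: "inj_on p J" "Q.independent (p ` J)"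
    "\<forall>j\<in>J. lo j < p j \<and> p j < lo j + 1"
    by blast
  have "countable (Q.span (p ` J))"
    using insert by (intro countable_Q_span) auto
  moreover have "uncountable {lo i<..<lo i + 1}"
    by (simp add: uncountable_open_interval)
  ultimately obtain y where y: "y \<in> {lo i<..<lo i + 1}" "y \<notin> Q.span (p ` J)"
    by (metis countable_subset subsetI)
  define p' where "p' = p(i := y)"
  have image_J: "p' ` J = p ` J"
    using insert unfolding p'_def by auto
  have "y \<notin> p ` J"
    using y(2) Q.span_base by blast
  then have "inj_on p' (insert i J)"
    using p(1) insert(2) image_J unfolding p'_def by (auto simp: inj_on_def)
  moreover have "p' ` insert i J = insert y (p ` J)"
    using image_J by (metis image_insert fun_upd_same p'_def)
  moreover have "Q.independent (insert y (p ` J))"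
    using p(2) y(2) by (intro Q.independent_insertI)
  moreover have "\<forall>j\<in>insert i J. lo j < p' j \<and> p' j < lo j + 1"
    using p(3) y(1) insert(2) by (auto simp: p'_def)
  ultimately show ?case
    by metis
qed


section \<open>Mimicking networks and the rational span of the costs\<close>

lemma finite_separating: "finite V \<Longrightarrow> finite {W. separating V Q S W}"
  by (rule finite_subset[of _ "Pow V"]) (auto simp: separating_def)

text \<open>The separating cuts form a finite nonempty set, so the minimum cut is
  attained.\<close>
lemma mincut_attained:
  assumes "finite V" "S \<subseteq> Q" "Q \<subseteq> V"
  shows "mincut V E c Q S \<in> cut_cost E c ` {W. separating V Q S W}"
proof -
  have "S \<in> {W. separating V Q S W}"
    using assms by (auto simp: separating_def)
  then show ?thesis
    unfolding mincut_def using finite_separating[OF assms(1)]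
    by (intro Min_in finite_imageI) blast+
qed

lemma mincut_eqI:
  assumes "finite V" "separating V Q S W0" "cut_cost E c W0 = x"
    and "\<And>W. separating V Q S W \<Longrightarrow> x \<le> cut_cost E c W"
  shows "mincut V E c Q S = x"
  unfolding mincut_def using assms finite_separating[OF assms(1)]
  by (intro Min_eqI) (auto intro!: image_eqI[of _ _ W0])

text \<open>Every min-cut value is a sum of edge costs.\<close>
lemma mincut_in_Q_span:
  assumes "network V E c" "S \<subseteq> Q" "Q \<subseteq> V"
  shows "mincut V E c Q S \<in> Q.span (c ` E)"
proof -
  have "cut_cost E c W \<in> Q.span (c ` E)" for W
    unfolding cut_cost_def by (intro Q.span_sum Q.span_base) blast
  then show ?thesis
    using mincut_attained[of V S Q E c] assms by (auto simp: network_def)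
qed

lemma network_edges_bound:
  assumes "network V E c"
  shows "finite E" "card E \<le> card V * card V"
proof -
  have sub: "E \<subseteq> (\<lambda>(u, v). {u, v}) ` (V \<times> V)"
    using assms unfolding network_def by fast
  have "finite V"
    using assms by (simp add: network_def)
  then show "finite E"
    using sub finite_subset by blast
  have "card E \<le> card ((\<lambda>(u, v). {u, v}) ` (V \<times> V))"
    using sub \<open>finite V\<close> by (intro card_mono) auto
  also have "\<dots> \<le> card (V \<times> V)"
    using \<open>finite V\<close> by (intro card_image_le) auto
  finally show "card E \<le> card V * card V"
    by (simp add: card_cartesian_product)
qed

lemma mimicking_size_bound:
  assumes mim: "mimicking V E c Q V' E' c'"
    and splits: "\<forall>j\<in>J. S j \<subseteq> Q \<and> S j \<noteq> {} \<and> S j \<noteq> Q"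
    and inj: "inj_on (\<lambda>j. mincut V E c Q (S j)) J"
    and indep: "Q.independent ((\<lambda>j. mincut V E c Q (S j)) ` J)"
  shows "card J \<le> card V' * card V'"
proof -
  have net': "network V' E' c'" and QV': "Q \<subseteq> V'"
    using mim by (auto simp: mimicking_def)
  have "mincut V E c Q (S j) = mincut V' E' c' Q (S j)" if "j \<in> J" for j
    using mim splits that unfolding mimicking_def by auto
  then have "(\<lambda>j. mincut V E c Q (S j)) ` J \<subseteq> Q.span (c' ` E')"
    using mincut_in_Q_span[OF net' _ QV'] splits by auto
  then have "card ((\<lambda>j. mincut V E c Q (S j)) ` J) \<le> card (c' ` E')"
    using Q.independent_span_bound[OF _ indep] network_edges_bound(1)[OF net'] by blast
  also have "\<dots> \<le> card E'"
    using network_edges_bound(1)[OF net'] by (rule card_image_le)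
  also have "\<dots> \<le> card V' * card V'"
    by (rule network_edges_bound(2)[OF net'])
  finally show ?thesis
    using card_image[OF inj] by simp
qed


section \<open>The star gadget\<close>

text \<open>Terminals are 0..k-1; the non-terminal for index j is k+j.  It is
  joined to terminal 0 (cost a j) and to every terminal in T j (cost 1).\<close>
locale star_gadget =
  fixes k :: nat and J :: "nat set" and T :: "nat \<Rightarrow> nat set"
  assumes k_pos: "0 < k"
    and finite_J: "finite J"
    and T_sub: "j \<in> J \<Longrightarrow> T j \<subseteq> {1..<k}"
begin

definition vertices :: "nat set" where
  "vertices = {..<k} \<union> (\<lambda>j. k + j) ` J"

definition terminals :: "nat set" where
  "terminals = {..<k}"

definition edges :: "nat set set" where
  "edges = (\<lambda>(j, t). {t, k + j}) ` (SIGMA j:J. insert 0 (T j))"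

definition cost :: "(nat \<Rightarrow> real) \<Rightarrow> nat set \<Rightarrow> real" where
  "cost a e = (if 0 \<in> e then a (Max e - k) else 1)"

lemma nbr_lt_k: "j \<in> J \<Longrightarrow> t \<in> insert 0 (T j) \<Longrightarrow> t < k"
  using T_sub k_pos by force

lemma finite_T: "j \<in> J \<Longrightarrow> finite (T j)"
  using T_sub finite_subset by blast

lemma cost_hub: "cost a {0, k + j} = a j"
  using k_pos by (simp add: cost_def)

lemma cost_unit: "j \<in> J \<Longrightarrow> t \<in> T j \<Longrightarrow> cost a {t, k + j} = 1"
  using T_sub[of j] by (auto simp: cost_def)

lemma network:
  assumes "\<forall>j\<in>J. 0 < a j"
  shows "network vertices edges (cost a)"
proof -
  have "(\<exists>u v. e = {u, v} \<and> u \<noteq> v \<and> u \<in> vertices \<and> v \<in> vertices) \<and> 0 < cost a e"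
    if "e \<in> edges" for e
  proof -
    obtain j t where e: "e = {t, k + j}" "j \<in> J" "t \<in> insert 0 (T j)"
      using \<open>e \<in> edges\<close> unfolding edges_def by auto
    have "t < k"
      using nbr_lt_k[OF e(2,3)] .
    then have "e = {t, k + j} \<and> t \<noteq> k + j \<and> t \<in> vertices \<and> k + j \<in> vertices"
      using e(1,2) by (auto simp: vertices_def)
    moreover have "0 < cost a e"
      using e assms cost_hub cost_unit by auto
    ultimately show ?thesis
      by blast
  qed
  moreover have "finite vertices"
    using finite_J by (simp add: vertices_def)
  ultimately show ?thesis
    unfolding network_def by blast
qed

lemma edges_bipartite: "e \<in> edges \<Longrightarrow> card (e \<inter> terminals) = 1"
proof -
  assume "e \<in> edges"
  then obtain j t where e: "e = {t, k + j}" "j \<in> J" "t \<in> insert 0 (T j)"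
    unfolding edges_def by auto
  then have "e \<inter> terminals = {t}"
    using nbr_lt_k[OF e(2,3)] by (auto simp: terminals_def)
  then show ?thesis by simp
qed

definition local_cut :: "(nat \<Rightarrow> real) \<Rightarrow> nat set \<Rightarrow> nat \<Rightarrow> real" where
  "local_cut a W j =
     (\<Sum>t\<in>insert 0 (T j). if (t \<in> W) \<noteq> (k + j \<in> W) then cost a {t, k + j} else 0)"

lemma edges_inj: "inj_on (\<lambda>(j, t). {t, k + j}) (SIGMA j:J. insert 0 (T j))"
  unfolding inj_on_def by (auto simp: doubleton_eq_iff dest: nbr_lt_k)

text \<open>Every edge has exactly one non-terminal end, so a cut splits into
  the local cuts at the non-terminals.\<close>
lemma cut_cost_local: "cut_cost edges (cost a) W = (\<Sum>j\<in>J. local_cut a W j)"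
proof -
  let ?f = "\<lambda>(j, t). {t, k + j}"
  let ?P = "SIGMA j:J. insert 0 (T j)"
  have finite_P: "finite ?P"
    using finite_J finite_T by (intro finite_SigmaI) auto
  have crossing: "card ({t, k + j} \<inter> W) = 1 \<longleftrightarrow> (t \<in> W) \<noteq> (k + j \<in> W)"
    if "t < k" for t j
    using that by (cases "t \<in> W"; cases "k + j \<in> W") (auto simp: Int_insert_left)
  have "{e \<in> edges. card (e \<inter> W) = 1} = ?f ` {x \<in> ?P. card (?f x \<inter> W) = 1}"
    unfolding edges_def by auto
  then have "cut_cost edges (cost a) W = (\<Sum>x\<in>{x \<in> ?P. card (?f x \<inter> W) = 1}. cost a (?f x))"
    unfolding cut_cost_def by (simp add: sum.reindex inj_on_subset[OF edges_inj])
  also have "\<dots> = (\<Sum>x\<in>?P. if card (?f x \<inter> W) = 1 then cost a (?f x) else 0)"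
    using finite_P by (simp add: sum.inter_filter)
  also have "\<dots> = (\<Sum>(j, t)\<in>?P. if (t \<in> W) \<noteq> (k + j \<in> W) then cost a {t, k + j} else 0)"
  proof (intro sum.cong refl)
    fix x assume "x \<in> ?P"
    then obtain j t where "x = (j, t)" "t < k"
      using nbr_lt_k by auto
    then show "(if card (?f x \<inter> W) = 1 then cost a (?f x) else 0) =
        (case x of (j, t) \<Rightarrow> if (t \<in> W) \<noteq> (k + j \<in> W) then cost a {t, k + j} else 0)"
      using crossing by simp
  qed
  also have "\<dots> = (\<Sum>j\<in>J. local_cut a W j)"
    unfolding local_cut_def using finite_J finite_T by (subst sum.Sigma) auto
  finally show ?thesis .
qed

lemma local_cut_separating:
  assumes S: "S \<subseteq> {1..<k}" and W: "W \<inter> terminals = S \<or> W \<inter> terminals = terminals - S"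
    and j: "j \<in> J"
  shows "local_cut a W j =
    (if (k + j \<in> W) = (0 \<in> W) then real (card (T j \<inter> S)) else a j + real (card (T j - S)))"
proof -
  have side: "t \<in> W \<longleftrightarrow> (t \<in> S \<longleftrightarrow> 0 \<notin> W)" if "t < k" for t
  proof -
    have "0 \<in> terminals" "t \<in> terminals" "0 \<notin> S"
      using S k_pos that by (auto simp: terminals_def)
    with W show ?thesis
      by blast
  qed
  have crossing: "{t\<in>T j. (t \<in> W) \<noteq> (k + j \<in> W)} =
      (if (k + j \<in> W) = (0 \<in> W) then T j \<inter> S else T j - S)"
  proof -
    have "t \<in> W \<longleftrightarrow> (t \<in> S \<longleftrightarrow> 0 \<notin> W)" if "t \<in> T j" for t
      using side nbr_lt_k[OF j] that by blast
    then show ?thesis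
      by (cases "k + j \<in> W"; cases "0 \<in> W") auto
  qed
  have "(\<Sum>t\<in>T j. if (t \<in> W) \<noteq> (k + j \<in> W) then cost a {t, k + j} else 0) =
        (\<Sum>t\<in>T j. if (t \<in> W) \<noteq> (k + j \<in> W) then 1 else 0)"
    by (intro sum.cong refl) (simp add: cost_unit[OF j])
  also have "\<dots> = real (card {t\<in>T j. (t \<in> W) \<noteq> (k + j \<in> W)})"
    by (simp add: sum.inter_filter[symmetric] finite_T[OF j])
  finally have unit_edges: "(\<Sum>t\<in>T j. if (t \<in> W) \<noteq> (k + j \<in> W) then cost a {t, k + j} else 0) =
      real (card (if (k + j \<in> W) = (0 \<in> W) then T j \<inter> S else T j - S))"
    by (simp only: crossing)
  have "0 \<notin> T j"
    using T_sub[OF j] by auto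
  then show ?thesis
    unfolding local_cut_def using unit_edges finite_T[OF j] by (simp add: cost_hub)
qed

text \<open>Minimising each local cut independently gives the min-cut formula.\<close>
theorem mincut_formula:
  assumes S: "S \<subseteq> {1..<k}"
  shows "mincut vertices edges (cost a) terminals S =
    (\<Sum>j\<in>J. min (real (card (T j \<inter> S))) (a j + real (card (T j - S))))"
    (is "_ = (\<Sum>j\<in>J. ?h j)")
proof (rule mincut_eqI)
  show "finite vertices"
    using finite_J by (simp add: vertices_def)
  show "(\<Sum>j\<in>J. ?h j) \<le> cut_cost edges (cost a) W"
    if "separating vertices terminals S W" for W
  proof -
    have "?h j \<le> local_cut a W j" if "j \<in> J" for j
      using local_cut_separating[OF S _ that, of W] \<open>separating vertices terminals S W\<close>
      by (auto simp: separating_def)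
    then show ?thesis
      unfolding cut_cost_local by (rule sum_mono)
  qed
  text \<open>The optimal cut puts terminal 0 on the side of the terminals outside S
    and each non-terminal on whichever side is cheaper for it.\<close>
  define W0 where
    "W0 = (terminals - S) \<union>
       (\<lambda>j. k + j) ` {j\<in>J. real (card (T j \<inter> S)) \<le> a j + real (card (T j - S))}"
  have W0_terminals: "W0 \<inter> terminals = terminals - S"
    unfolding W0_def terminals_def by auto
  then show "separating vertices terminals S W0"
    unfolding separating_def W0_def vertices_def terminals_def by auto
  have "0 \<in> W0"
    using S k_pos by (auto simp: W0_def terminals_def)
  moreover have "k + j \<in> W0 \<longleftrightarrow> real (card (T j \<inter> S)) \<le> a j + real (card (T j - S))"
    if "j \<in> J" for j
    using that unfolding W0_def terminals_def by auto
  ultimately have "local_cut a W0 j = ?h j" if "j \<in> J" for j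
    using local_cut_separating[OF S _ that] W0_terminals that by auto
  then show "cut_cost edges (cost a) W0 = (\<Sum>j\<in>J. ?h j)"
    unfolding cut_cost_local by (rule sum.cong[OF refl])
qed

text \<open>If the T j form an antichain and |T j| - 1 < a j < |T j|, the
  minimum cut for S = T Y cuts the hub edge at Y and otherwise puts every
  non-terminal on the side of terminal 0.\<close>
corollary mincut_antichain:
  assumes antichain: "\<And>i j. i \<in> J \<Longrightarrow> j \<in> J \<Longrightarrow> i \<noteq> j \<Longrightarrow> \<not> T i \<subseteq> T j"
    and a: "\<forall>j\<in>J. real (card (T j)) - 1 < a j \<and> a j < real (card (T j))"
    and Y: "Y \<in> J"
  shows "mincut vertices edges (cost a) terminals (T Y) =
    a Y + (\<Sum>j\<in>J - {Y}. real (card (T j \<inter> T Y)))"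
proof -
  have "min (real (card (T j \<inter> T Y))) (a j + real (card (T j - T Y))) = real (card (T j \<inter> T Y))"
    if "j \<in> J" "j \<noteq> Y" for j
  proof -
    have "T j \<inter> T Y \<subset> T j"
      using antichain[OF that(1) Y that(2)] by blast
    then have "card (T j \<inter> T Y) < card (T j)"
      using T_sub[OF that(1)] finite_subset by (intro psubset_card_mono) auto
    then show ?thesis
      using a that(1) by auto
  qed
  moreover have "min (real (card (T Y \<inter> T Y))) (a Y + real (card (T Y - T Y))) = a Y"
    using a Y by auto
  ultimately show ?thesis
    using mincut_formula[OF T_sub[OF Y]] finite_J Y by (simp add: sum.remove)
qed

text \<open>For an antichain of nonempty sets, hub costs can be chosen so that the
  min-cut values of the splits T j are pairwise distinct and Q-independent:
  pick the values p j themselves Q-independent in the windows allowed by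
  the corollary above, and solve for a j.\<close>
theorem independent_mincuts:
  assumes antichain: "\<And>i j. i \<in> J \<Longrightarrow> j \<in> J \<Longrightarrow> i \<noteq> j \<Longrightarrow> \<not> T i \<subseteq> T j"
    and nonempty: "\<And>j. j \<in> J \<Longrightarrow> T j \<noteq> {}"
  shows "\<exists>a. (\<forall>j\<in>J. 0 < a j) \<and>
    inj_on (\<lambda>j. mincut vertices edges (cost a) terminals (T j)) J \<and>
    Q.independent ((\<lambda>j. mincut vertices edges (cost a) terminals (T j)) ` J)"
proof -
  define offset where "offset Y = (\<Sum>j\<in>J - {Y}. real (card (T j \<inter> T Y)))" for Y
  obtain p where p: "inj_on p J" "Q.independent (p ` J)"
    "\<forall>j\<in>J. offset j + card (T j) - 1 < p j \<and> p j < offset j + card (T j)"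
    using Q_independent_in_intervals[OF finite_J, of "\<lambda>j. offset j + card (T j) - 1"] by auto
  define a where "a j = p j - offset j" for j
  have a: "\<forall>j\<in>J. real (card (T j)) - 1 < a j \<and> a j < real (card (T j))"
  proof
    fix j
    assume "j \<in> J"
    with p(3) have "offset j + card (T j) - 1 < p j \<and> p j < offset j + card (T j)"
      by blast
    then show "real (card (T j)) - 1 < a j \<and> a j < real (card (T j))"
      by (simp add: a_def)
  qed
  have a_pos: "0 < a j" if "j \<in> J" for j
  proof -
    have "1 \<le> real (card (T j))"
      using nonempty[OF that] finite_T[OF that] by (simp add: Suc_le_eq card_gt_0_iff)
    moreover have "real (card (T j)) - 1 < a j"
      using a that by blast
    ultimately show "0 < a j"
      by linarith
  qed
  have mincut_p: "mincut vertices edges (cost a) terminals (T j) = p j" if "j \<in> J" for j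
  proof -
    have "mincut vertices edges (cost a) terminals (T j) = a j + offset j"
      using mincut_antichain[OF antichain a that] by (simp add: offset_def)
    then show ?thesis
      by (simp add: a_def)
  qed
  have "inj_on (\<lambda>j. mincut vertices edges (cost a) terminals (T j)) J \<longleftrightarrow> inj_on p J"
    by (rule inj_on_cong) (rule mincut_p)
  then have inj: "inj_on (\<lambda>j. mincut vertices edges (cost a) terminals (T j)) J"
    using p(1) by blast
  have "(\<lambda>j. mincut vertices edges (cost a) terminals (T j)) ` J = p ` J"
    by (rule image_cong[OF refl mincut_p])
  then have indep: "Q.independent ((\<lambda>j. mincut vertices edges (cost a) terminals (T j)) ` J)"
    using p(2) by simp
  show ?thesis
    using a_pos inj indep by blast
qed

end


section \<open>An antichain of bit patterns\<close>

text \<open>The set chosen by j from the pairs {2i+1, 2i+2}, i < m: the upper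
  element when bit i of j is set, the lower one otherwise.\<close>
definition bit_pattern :: "nat \<Rightarrow> nat \<Rightarrow> nat set" where
  "bit_pattern m j = {t. 1 \<le> t \<and> t \<le> 2 * m \<and> (bit j ((t - 1) div 2) \<longleftrightarrow> even t)}"

lemma bit_pattern_sub: "bit_pattern m j \<subseteq> {1..2 * m}"
  by (auto simp: bit_pattern_def)

lemma bit_pattern_choice:
  "i < m \<Longrightarrow> (if bit j i then 2 * i + 2 else 2 * i + 1) \<in> bit_pattern m j' \<longleftrightarrow> bit j' i = bit j i"
  by (auto simp: bit_pattern_def)

lemma bit_pattern_nonempty: "0 < m \<Longrightarrow> bit_pattern m j \<noteq> {}"
  using bit_pattern_choice[of 0 m j j] by blast

lemma low_bits_differ:
  fixes j j' :: nat
  assumes "j < 2 ^ m" "j' < 2 ^ m" "j \<noteq> j'"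
  shows "\<exists>i<m. bit j i \<noteq> bit j' i"
proof (rule ccontr)
  assume "\<not> ?thesis"
  moreover have "take_bit m j = j" "take_bit m j' = j'"
    using assms by (simp_all add: take_bit_nat_eq_self_iff)
  ultimately have "\<forall>n. bit j n = bit j' n"
    by (metis bit_take_bit_iff)
  then show False
    using assms(3) bit_eq_iff by blast
qed

lemma bit_pattern_antichain:
  assumes "j < 2 ^ m" "j' < 2 ^ m" "j \<noteq> j'"
  shows "\<not> bit_pattern m j \<subseteq> bit_pattern m j'"
proof -
  obtain i where "i < m" "bit j i \<noteq> bit j' i"
    using low_bits_differ[OF assms] by blast
  then show ?thesis
    using bit_pattern_choice[of i m j j] bit_pattern_choice[of i m j j'] by auto
qed


lemma hard_instance:
  fixes k :: nat
  defines "m \<equiv> (k - 1) div 2"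
  assumes k: "k > 5"
  shows "\<exists>(V::nat set) E c Q. network V E c \<and> Q \<subseteq> V \<and> card Q = k \<and>
     (\<forall>e\<in>E. card (e \<inter> Q) = 1) \<and>
     (\<forall>V' E' c'. mimicking V E c Q V' E' c' \<longrightarrow> 2 ^ m \<le> card V' * card V')"
proof -
  let ?J = "{..<2 ^ m}" and ?T = "bit_pattern m"
  have "2 * m < k"
    using k unfolding m_def by presburger
  then have T_sub: "?T j \<subseteq> {1..<k}" for j
    using bit_pattern_sub[of m j] by fastforce
  then interpret G: star_gadget k ?J ?T
    using k by unfold_locales auto
  have nonempty: "?T j \<noteq> {}" for j
    using bit_pattern_nonempty[of m j] k by (simp add: m_def)
  have antichain: "\<And>i j. i \<in> ?J \<Longrightarrow> j \<in> ?J \<Longrightarrow> i \<noteq> j \<Longrightarrow> \<not> ?T i \<subseteq> ?T j"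
    using bit_pattern_antichain by blast
  obtain a where a_pos: "\<forall>j\<in>?J. 0 < a j"
    and inj: "inj_on (\<lambda>j. mincut G.vertices G.edges (G.cost a) G.terminals (?T j)) ?J"
    and indep: "Q.independent ((\<lambda>j. mincut G.vertices G.edges (G.cost a) G.terminals (?T j)) ` ?J)"
    using G.independent_mincuts[OF antichain nonempty] by blast
  have splits: "\<forall>j\<in>?J. ?T j \<subseteq> G.terminals \<and> ?T j \<noteq> {} \<and> ?T j \<noteq> G.terminals"
  proof
    fix j :: nat
    have "0 \<in> G.terminals" "0 \<notin> ?T j" "?T j \<subseteq> G.terminals"
      using T_sub[of j] k by (auto simp: G.terminals_def)
    then show "?T j \<subseteq> G.terminals \<and> ?T j \<noteq> {} \<and> ?T j \<noteq> G.terminals"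
      using nonempty by blast
  qed
  show ?thesis
  proof (intro exI conjI allI impI ballI)
    show "network G.vertices G.edges (G.cost a)"
      using a_pos by (rule G.network)
    show "G.terminals \<subseteq> G.vertices" "card G.terminals = k"
      by (auto simp: G.terminals_def G.vertices_def)
    show "card (e \<inter> G.terminals) = 1" if "e \<in> G.edges" for e
      using that by (rule G.edges_bipartite)
    fix V' E' c'
    assume "mimicking G.vertices G.edges (G.cost a) G.terminals V' E' c'"
    from mimicking_size_bound[OF this splits inj indep]
    show "2 ^ m \<le> card V' * card V'"
      by simp
  qed
qed

text \<open>Since 2m + 2 >= k for m = (k-1) div 2, the bound 2^m <= n^2 gives
  n >= 2^(k/6).\<close>
lemma exponent_bound:
  fixes k n :: nat
  assumes "5 < k" "2 ^ ((k - 1) div 2) \<le> n * n"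
  shows "2 powr (1/6 * real k) \<le> real n"
proof (rule ccontr)
  let ?m = "(k - 1) div 2"
  assume "\<not> ?thesis"
  then have n_small: "real n < 2 powr (1/6 * real k)"
    by simp
  have "k \<le> 2 * ?m + 2"
    by presburger
  then have "1/3 * real k \<le> real ?m"
    using assms(1) by linarith
  then have "2 powr (1/3 * real k) \<le> 2 powr real ?m"
    by (rule powr_mono) simp
  also have "\<dots> = real (2 ^ ?m)"
    by (simp add: powr_realpow)
  also have "\<dots> \<le> real (n * n)"
    using assms(2) by (rule of_nat_mono)
  also have "\<dots> < 2 powr (1/6 * real k) * 2 powr (1/6 * real k)"
    using n_small by (simp add: mult_strict_mono)
  also have "\<dots> = 2 powr (1/3 * real k)"
    by (simp add: powr_add[symmetric])
  finally show False
    by simp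
qed

theorem theorem1p2:
  shows "\<exists>\<alpha>::real. \<alpha> > 0 \<and>
    (\<forall>k::nat. k > 5 \<longrightarrow>
      (\<exists>(V::nat set) E c Q. network V E c \<and> Q \<subseteq> V \<and> card Q = k \<and>
         (\<forall>e\<in>E. card (e \<inter> Q) = 1) \<and>
         (\<forall>V' E' c'. mimicking V E c Q V' E' c' \<longrightarrow> real (card V') \<ge> 2 powr (\<alpha> * real k))))"
proof (intro exI[of _ "1/6"] conjI allI impI)
  fix k :: nat
  assume k: "k > 5"
  obtain V :: "nat set" and E c Q
    where gadget: "network V E c \<and> Q \<subseteq> V \<and> card Q = k \<and> (\<forall>e\<in>E. card (e \<inter> Q) = 1)"
      and bound: "\<forall>V' E' c'. mimicking V E c Q V' E' c' \<longrightarrow> 2 ^ ((k - 1) div 2) \<le> card V' * card V'"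
    using hard_instance[OF k] by (elim exE conjE) (rule that, blast+)
  have "\<forall>V' E' c'. mimicking V E c Q V' E' c' \<longrightarrow> 2 powr (1/6 * real k) \<le> real (card V')"
    using bound exponent_bound[OF k] by blast
  with gadget show "\<exists>(V::nat set) E c Q. network V E c \<and> Q \<subseteq> V \<and> card Q = k \<and>
      (\<forall>e\<in>E. card (e \<inter> Q) = 1) \<and>
      (\<forall>V' E' c'. mimicking V E c Q V' E' c' \<longrightarrow> 2 powr (1/6 * real k) \<le> real (card V'))"
    by (intro exI[of _ V] exI[of _ E] exI[of _ c] exI[of _ Q]) simp
qed simp

end
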